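(* If $q>0$ is an equilibrium price of the TWDPP mechanism, then $\mathrm{Welfare}(\vec x(q))\ge\frac{\mathrm{OPT}}{2(1+\delta)}\min\{1,\delta\}$.
   Context: Dynamic posted-price setting: at each time step a block with $m$ slots is produced; $n$ bidders arrive with values $v_1,\dots,v_n$ drawn i.i.d. from a distribution $F$, each participating once and bidding truthfully. Given posted price $q>0$, $M(q)=\{i:v_i\ge q\}$, $N(q)=|M(q)|$. TWDPP: $B$ is chosen uniformly at random among subsets of $M(q)$ of size $\min\{m,N(q)\}$; $x_i(q)=1$ if $i\in B$ (and $i$ pays $q$), else $0$; the next price is $T_{TW}(q,B)=\alpha\frac1m\sum_{i\in B}\min\{b_i,(1+\delta)q\}+(1-\alpha)q$ if $|B|<m$ and $\alpha(1+\delta)q+(1-\alpha)q$ if $|B|=m$, with $\alpha\in(0,1)$, $\delta\in(0,\infty)$. An equilibrium price is a price $q$ with $\mathbb{E}[T_{TW}(q,B)]=q$, expectation over values and the random allocation. $\mathrm{Welfare}(\vec x(q))=\mathbb{E}[\sum_i v_i x_i(q)]$, and $\mathrm{OPT}$ is the expected sum of the $\min\{m,n\}$ largest values. *)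

theory Defs
  imports "HOL-Probability.Probability"
begin

text \<open>Bidders are indexed by 0..n-1; a value profile is v :: nat => real
  (only the entries below n matter).\<close>

definition winners_set :: "nat \<Rightarrow> real \<Rightarrow> (nat \<Rightarrow> real) \<Rightarrow> nat set" where
  "winners_set n q v = {i \<in> {..<n}. v i \<ge> q}"

definition num_above :: "nat \<Rightarrow> real \<Rightarrow> (nat \<Rightarrow> real) \<Rightarrow> nat" where
  "num_above n q v = card (winners_set n q v)"

definition blocks :: "nat \<Rightarrow> nat \<Rightarrow> real \<Rightarrow> (nat \<Rightarrow> real) \<Rightarrow> nat set set" where
  "blocks m n q v = {B. B \<subseteq> winners_set n q v \<and> card B = min m (num_above n q v)}"

definition tw_alloc :: "nat \<Rightarrow> nat \<Rightarrow> real \<Rightarrow> (nat \<Rightarrow> real) \<Rightarrow> nat set pmf" where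
  "tw_alloc m n q v = pmf_of_set (blocks m n q v)"

definition T_TW :: "real \<Rightarrow> real \<Rightarrow> nat \<Rightarrow> real \<Rightarrow> (nat \<Rightarrow> real) \<Rightarrow> nat set \<Rightarrow> real" where
  "T_TW \<alpha> \<delta> m q v B =
     (if card B < m
      then \<alpha> * (1 / real m) * (\<Sum>i\<in>B. min (v i) ((1 + \<delta>) * q)) + (1 - \<alpha>) * q
      else \<alpha> * (1 + \<delta>) * q + (1 - \<alpha>) * q)"

definition values_measure :: "nat \<Rightarrow> real measure \<Rightarrow> (nat \<Rightarrow> real) measure" where
  "values_measure n F = PiM {..<n} (\<lambda>_. F)"

definition expected_T :: "real \<Rightarrow> real \<Rightarrow> nat \<Rightarrow> nat \<Rightarrow> real measure \<Rightarrow> real \<Rightarrow> real" where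
  "expected_T \<alpha> \<delta> m n F q =
     (\<integral>v. measure_pmf.expectation (tw_alloc m n q v) (\<lambda>B. T_TW \<alpha> \<delta> m q v B)
        \<partial>values_measure n F)"

definition equilibrium_price :: "real \<Rightarrow> real \<Rightarrow> nat \<Rightarrow> nat \<Rightarrow> real measure \<Rightarrow> real \<Rightarrow> bool" where
  "equilibrium_price \<alpha> \<delta> m n F q \<longleftrightarrow> expected_T \<alpha> \<delta> m n F q = q"

definition welfare :: "nat \<Rightarrow> nat \<Rightarrow> real measure \<Rightarrow> real \<Rightarrow> real" where
  "welfare m n F q =
     (\<integral>v. measure_pmf.expectation (tw_alloc m n q v)
            (\<lambda>B. \<Sum>i<n. v i * (if i \<in> B then 1 else 0))
        \<partial>values_measure n F)"

definition top_sum :: "nat \<Rightarrow> nat \<Rightarrow> (nat \<Rightarrow> real) \<Rightarrow> real" where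
  "top_sum k n v = sum_list (take k (rev (sort (map v [0..<n]))))"

definition OPT :: "nat \<Rightarrow> nat \<Rightarrow> real measure \<Rightarrow> real" where
  "OPT m n F = (\<integral>v. top_sum (min m n) n v \<partial>values_measure n F)"

end

theory Submission
  imports Defs
begin

(* Write N for the number of bidders with value at least q and X for tw_target, so that
   E[T_TW] = alpha X + (1 - alpha) q.  At an equilibrium price E[X] = q.  Since
   m X <= (1 + delta) q min(m, N) and X = (1 + delta) q whenever N >= m, this yields
   E[min(m, N)] >= m / (1 + delta) and P(N < m) >= delta / (1 + delta).  The welfare is at
   least q min(m, N), plus the whole surplus sum_i (v_i - q)^+ when N <= m; by independence
   each bidder contributes at least P(N < m) E[(v - q)^+] to the latter.  As
   OPT <= m q + n E[(v - q)^+], this gives (1 + delta) Welfare >= min(1, delta) OPT. *)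

definition tw_target :: "real \<Rightarrow> nat \<Rightarrow> nat \<Rightarrow> real \<Rightarrow> (nat \<Rightarrow> real) \<Rightarrow> real" where
  "tw_target \<delta> m n q v =
     (if num_above n q v < m
      then (\<Sum>i\<in>winners_set n q v. min (v i) ((1 + \<delta>) * q)) / real m
      else (1 + \<delta>) * q)"

definition surplus :: "nat \<Rightarrow> real \<Rightarrow> (nat \<Rightarrow> real) \<Rightarrow> real" where
  "surplus n q v = (\<Sum>i<n. max (v i - q) 0)"

definition welfare_lb :: "nat \<Rightarrow> nat \<Rightarrow> real \<Rightarrow> (nat \<Rightarrow> real) \<Rightarrow> real" where
  "welfare_lb m n q v =
     q * min (real m) (real (num_above n q v))
     + (\<Sum>i<n. of_bool (num_above n q v \<le> m) * max (v i - q) 0)"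

definition blocks_of :: "nat \<Rightarrow> nat set \<Rightarrow> nat set set" where
  "blocks_of m A = {B. B \<subseteq> A \<and> card B = min m (card A)}"

lemma winners_set_subset: "winners_set n q v \<subseteq> {..<n}"
  by (auto simp: winners_set_def)

lemma finite_winners_set [simp]: "finite (winners_set n q v)"
  using winners_set_subset by (rule finite_subset) simp

lemma sum_winners_set: "(\<Sum>i\<in>winners_set n q v. f i) = (\<Sum>i<n. if q \<le> v i then f i else 0)"
  unfolding winners_set_def by (rule sum.inter_filter) simp

lemma num_above_eq_sum: "num_above n q v = (\<Sum>i<n. of_bool (q \<le> v i))"
  unfolding num_above_def card_eq_sum sum_winners_set by (simp add: of_bool_def)

lemma winners_set_eq_iff:
  assumes "A \<subseteq> {..<n}"
  shows "winners_set n q v = A \<longleftrightarrow> (\<forall>i<n. q \<le> v i \<longleftrightarrow> i \<in> A)"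
  using assms by (auto simp: winners_set_def)

lemma blocks_eq_blocks_of: "blocks m n q v = blocks_of m (winners_set n q v)"
  by (simp add: blocks_def blocks_of_def num_above_def)

lemma finite_blocks_of: "finite A \<Longrightarrow> finite (blocks_of m A)"
  by (rule finite_subset[of _ "Pow A"]) (auto simp: blocks_of_def)

lemma blocks_of_nonempty: "finite A \<Longrightarrow> blocks_of m A \<noteq> {}"
  using obtain_subset_with_card_n[of "min m (card A)" A] by (auto simp: blocks_of_def)

lemma blocks_of_unsaturated: "finite A \<Longrightarrow> card A \<le> m \<Longrightarrow> blocks_of m A = {A}"
  by (auto simp: blocks_of_def dest: card_subset_eq)

lemma tw_alloc_eq: "tw_alloc m n q v = pmf_of_set (blocks_of m (winners_set n q v))"
  by (simp add: tw_alloc_def blocks_eq_blocks_of)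

lemma expectation_pmf_of_set_ge:
  fixes f :: "'a \<Rightarrow> real"
  assumes "finite S" "S \<noteq> {}" "\<And>x. x \<in> S \<Longrightarrow> c \<le> f x"
  shows "c \<le> measure_pmf.expectation (pmf_of_set S) f"
  using assms by (intro measure_pmf.integral_ge_const) (auto simp: AE_measure_pmf_iff integrable_measure_pmf_finite)

lemma expectation_pmf_of_set_const:
  fixes f :: "'a \<Rightarrow> real"
  assumes "finite S" "S \<noteq> {}" "\<And>x. x \<in> S \<Longrightarrow> f x = c"
  shows "measure_pmf.expectation (pmf_of_set S) f = c"
  using assms by (simp add: integral_pmf_of_set)

lemma expectation_T_TW:
  "measure_pmf.expectation (tw_alloc m n q v) (T_TW \<alpha> \<delta> m q v)
     = \<alpha> * tw_target \<delta> m n q v + (1 - \<alpha>) * q"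
  unfolding tw_alloc_eq
proof (rule expectation_pmf_of_set_const[OF finite_blocks_of blocks_of_nonempty])
  fix B assume "B \<in> blocks_of m (winners_set n q v)"
  then show "T_TW \<alpha> \<delta> m q v B = \<alpha> * tw_target \<delta> m n q v + (1 - \<alpha>) * q"
  proof (cases "num_above n q v < m")
    case True
    then have "B = winners_set n q v"
      using \<open>B \<in> _\<close> blocks_of_unsaturated by (auto simp: num_above_def)
    with True show ?thesis by (simp add: T_TW_def tw_target_def num_above_def)
  next
    case False
    with \<open>B \<in> _\<close> have "card B = m" by (simp add: blocks_of_def num_above_def)
    with False show ?thesis by (simp add: T_TW_def tw_target_def algebra_simps)
  qed
qed simp_all

lemma tw_target_nonneg: "0 \<le> q \<Longrightarrow> 0 \<le> \<delta> \<Longrightarrow> 0 \<le> tw_target \<delta> m n q v"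
  by (auto simp: tw_target_def winners_set_def intro!: sum_nonneg divide_nonneg_nonneg)

lemma sum_capped_winners_le:
  "(\<Sum>i\<in>winners_set n q v. min (v i) ((1 + \<delta>) * q)) \<le> (1 + \<delta>) * q * real (num_above n q v)"
  using sum_mono[of "winners_set n q v" "\<lambda>i. min (v i) ((1 + \<delta>) * q)" "\<lambda>_. (1 + \<delta>) * q"]
  by (simp add: num_above_def mult.commute)

lemma tw_target_le_capped_supply:
  "real m * tw_target \<delta> m n q v \<le> (1 + \<delta>) * q * min (real m) (real (num_above n q v))"
  using sum_capped_winners_le[where \<delta> = \<delta>] by (simp add: tw_target_def)

lemma tw_target_le:
  assumes "0 \<le> q" "0 \<le> \<delta>"
  shows "tw_target \<delta> m n q v \<le> (1 + \<delta>) * q"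
proof (cases "num_above n q v < m")
  case True
  have "real m * tw_target \<delta> m n q v \<le> (1 + \<delta>) * q * min (real m) (real (num_above n q v))"
    by (rule tw_target_le_capped_supply)
  also have "\<dots> \<le> (1 + \<delta>) * q * real m"
    using assms by (intro mult_left_mono) auto
  finally show ?thesis
    using True by (simp add: mult.commute)
qed (simp add: tw_target_def)

lemma tw_target_saturated_ge:
  "0 \<le> q \<Longrightarrow> 0 \<le> \<delta> \<Longrightarrow> (1 + \<delta>) * q * of_bool (m \<le> num_above n q v) \<le> tw_target \<delta> m n q v"
  using tw_target_nonneg[of q \<delta> m n v] by (auto simp: tw_target_def)

lemma sum_winners_set_values: "(\<Sum>i\<in>winners_set n q v. v i) = q * real (num_above n q v) + surplus n q v"
proof -
  have "(\<Sum>i\<in>winners_set n q v. v i) = (\<Sum>i<n. q * of_bool (q \<le> v i) + max (v i - q) 0)"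
    unfolding sum_winners_set by (intro sum.cong) auto
  then show ?thesis
    by (simp add: sum.distrib surplus_def num_above_eq_sum sum_distrib_left)
qed

lemma welfare_lb_le_expectation:
  assumes "0 \<le> q"
  shows "welfare_lb m n q v
    \<le> measure_pmf.expectation (tw_alloc m n q v) (\<lambda>B. \<Sum>i<n. v i * (if i \<in> B then 1 else 0))"
  unfolding tw_alloc_eq
proof (rule expectation_pmf_of_set_ge[OF finite_blocks_of blocks_of_nonempty])
  fix B assume B: "B \<in> blocks_of m (winners_set n q v)"
  then have "B \<subseteq> winners_set n q v" by (simp add: blocks_of_def)
  then have "{..<n} \<inter> B = B"
    using winners_set_subset by blast
  have "(\<Sum>i<n. v i * (if i \<in> B then 1 else 0)) = (\<Sum>i<n. if i \<in> B then v i else 0)"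
    by (intro sum.cong) auto
  also have "\<dots> = (\<Sum>i\<in>B. v i)"
    using sum.inter_restrict[of "{..<n}" v B] \<open>{..<n} \<inter> B = B\<close> by simp
  finally have "(\<Sum>i<n. v i * (if i \<in> B then 1 else 0)) = (\<Sum>i\<in>B. v i)" .
  moreover have "welfare_lb m n q v \<le> (\<Sum>i\<in>B. v i)"
  proof (cases "num_above n q v \<le> m")
    case True
    then have "B = winners_set n q v"
      using B blocks_of_unsaturated by (auto simp: num_above_def)
    with True show ?thesis
      by (simp add: welfare_lb_def sum_winners_set_values surplus_def sum_distrib_left)
  next
    case False
    with B have "card B = m" by (simp add: blocks_of_def num_above_def)
    moreover have "(\<Sum>i\<in>B. q) \<le> (\<Sum>i\<in>B. v i)"
      using \<open>B \<subseteq> _\<close> by (intro sum_mono) (auto simp: winners_set_def)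
    ultimately show ?thesis
      using False by (simp add: welfare_lb_def mult.commute)
  qed
  ultimately show "welfare_lb m n q v \<le> (\<Sum>i<n. v i * (if i \<in> B then 1 else 0))"
    by simp
qed simp_all

lemma sum_list_take_le:
  fixes q :: real
  assumes "0 \<le> q"
  shows "sum_list (take k xs) \<le> real k * q + (\<Sum>x\<leftarrow>xs. max (x - q) 0)"
proof (induction xs arbitrary: k)
  case (Cons x xs)
  show ?case
  proof (cases k)
    case 0
    then show ?thesis by (auto intro!: add_nonneg_nonneg sum_list_nonneg)
  next
    case (Suc k')
    have "x \<le> q + max (x - q) 0" by simp
    with Cons.IH[of k'] Suc show ?thesis by (simp add: distrib_right)
  qed
qed (use assms in simp)

lemma top_sum_le:
  assumes "0 \<le> q"
  shows "top_sum k n v \<le> real k * q + surplus n q v"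
proof -
  have "(\<Sum>x\<leftarrow>rev (sort (map v [0..<n])). max (x - q) 0) = (\<Sum>x\<leftarrow>map v [0..<n]. max (x - q) 0)"
    by (simp add: multiset.map_comp flip: sum_mset_sum_list)
  also have "\<dots> = surplus n q v"
    unfolding surplus_def map_map
    by (simp add: sum_set_upt_conv_sum_list_nat[symmetric] atLeast0LessThan comp_def)
  finally show ?thesis
    using sum_list_take_le[OF assms, of k "rev (sort (map v [0..<n]))"] by (simp add: top_sum_def)
qed

locale iid_values =
  fixes F :: "real measure" and n :: nat
  assumes prob_space_F: "prob_space F" and sets_F: "sets F = sets borel"
    and integrable_F: "integrable F (\<lambda>x. x)"
begin

abbreviation M :: "(nat \<Rightarrow> real) measure" where
  "M \<equiv> PiM {..<n} (\<lambda>_. F)"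

lemma values_measure_eq [simp]: "values_measure n F = M"
  by (simp add: values_measure_def)

sublocale V: product_prob_space "\<lambda>_. F" "{..<n}"
  by (rule product_prob_spaceI) (rule prob_space_F)

lemma measurable_value [measurable]: "i < n \<Longrightarrow> (\<lambda>v. v i) \<in> borel_measurable M"
  using measurable_component_singleton[of i "{..<n}" "\<lambda>_. F"] sets_F measurable_cong_sets by blast

lemma distr_value: "i < n \<Longrightarrow> distr M F (\<lambda>v. v i) = F"
  by (rule distr_PiM_component) (auto simp: prob_space_F)

lemma integrable_component:
  fixes f :: "real \<Rightarrow> real"
  assumes "integrable F f" "i < n"
  shows "integrable M (\<lambda>v. f (v i))"
  using integrable_distr_eq[of "\<lambda>v. v i" M F f] assms distr_value
  by (auto simp: measurable_component_singleton)

lemma integral_component: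
  fixes f :: "real \<Rightarrow> real"
  assumes "integrable F f" "i < n"
  shows "(\<integral>v. f (v i) \<partial>M) = (\<integral>x. f x \<partial>F)"
  using integral_distr[of "\<lambda>v. v i" M F f] assms distr_value
  by (auto simp: measurable_component_singleton)

lemma integrable_value: "i < n \<Longrightarrow> integrable M (\<lambda>v. v i)"
  using integrable_component[OF integrable_F] by simp

lemma integrable_excess_price: "integrable F (\<lambda>x. max (x - q) 0)"
  using integrable_F by auto

lemma integrable_excess: "i < n \<Longrightarrow> integrable M (\<lambda>v. max (v i - q) 0)"
  using integrable_excess_price by (rule integrable_component)

lemma measurable_num_above [measurable]: "(\<lambda>v. num_above n q v) \<in> M \<rightarrow>\<^sub>M count_space UNIV"
  unfolding num_above_eq_sum by measurable

lemma measurable_real_num_above [measurable]: "(\<lambda>v. real (num_above n q v)) \<in> borel_measurable M"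
  using measurable_num_above by (rule measurable_compose) simp

lemma measurable_tw_target [measurable]: "(\<lambda>v. tw_target \<delta> m n q v) \<in> borel_measurable M"
  unfolding tw_target_def sum_winners_set by measurable

lemma integrable_of_bool_mult:
  fixes g :: "(nat \<Rightarrow> real) \<Rightarrow> real"
  assumes "Measurable.pred M P" "integrable M g"
  shows "integrable M (\<lambda>v. of_bool (P v) * g v)"
proof -
  have "integrable M (\<lambda>v. g v * indicator {v \<in> space M. P v} v)"
    using assms by (intro integrable_real_mult_indicator) auto
  moreover have "integrable M (\<lambda>v. g v * indicator {v \<in> space M. P v} v)
      \<longleftrightarrow> integrable M (\<lambda>v. of_bool (P v) * g v)"
    by (rule Bochner_Integration.integrable_cong) (auto simp: indicator_def)
  ultimately show ?thesis by simp
qed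

lemma integrable_winners_set_cases:
  fixes h :: "nat set \<Rightarrow> (nat \<Rightarrow> real) \<Rightarrow> real"
  assumes "\<And>A. A \<subseteq> {..<n} \<Longrightarrow> integrable M (h A)"
  shows "integrable M (\<lambda>v. h (winners_set n q v) v)"
proof -
  have "integrable M (\<lambda>v. \<Sum>A\<in>Pow {..<n}. of_bool (winners_set n q v = A) * h A v)"
  proof (intro Bochner_Integration.integrable_sum integrable_of_bool_mult)
    fix A assume "A \<in> Pow {..<n}"
    then show "Measurable.pred M (\<lambda>v. winners_set n q v = A)" "integrable M (h A)"
      using assms by (simp_all add: winners_set_eq_iff)
  qed
  moreover have "(\<Sum>A\<in>Pow {..<n}. of_bool (winners_set n q v = A) * h A v) = h (winners_set n q v) v" for v
  proof -
    have "(\<Sum>A\<in>Pow {..<n}. of_bool (winners_set n q v = A) * h A v)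
        = (\<Sum>A\<in>Pow {..<n}. if winners_set n q v = A then h A v else 0)"
      by (intro sum.cong) auto
    then show ?thesis
      using winners_set_subset[of n q v] by (simp add: sum.delta')
  qed
  ultimately show ?thesis by simp
qed

lemma integrable_welfare_integrand:
  "integrable M (\<lambda>v. measure_pmf.expectation (tw_alloc m n q v)
     (\<lambda>B. \<Sum>i<n. v i * (if i \<in> B then 1 else 0)))"
  unfolding tw_alloc_eq
proof (rule integrable_winners_set_cases[where h = "\<lambda>A v. measure_pmf.expectation
    (pmf_of_set (blocks_of m A)) (\<lambda>B. \<Sum>i<n. v i * (if i \<in> B then 1 else 0))"])
  fix A :: "nat set" assume "A \<subseteq> {..<n}"
  then have "finite A" by (rule finite_subset) simp
  then show "integrable M (\<lambda>v. measure_pmf.expectation (pmf_of_set (blocks_of m A))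
      (\<lambda>B. \<Sum>i<n. v i * (if i \<in> B then 1 else 0)))"
    unfolding integral_pmf_of_set[OF blocks_of_nonempty finite_blocks_of, OF \<open>finite A\<close> \<open>finite A\<close>]
    by (intro integrable_divide_zero Bochner_Integration.integrable_sum integrable_mult_left
        integrable_value) auto
qed

lemma integrable_tw_target:
  assumes "0 \<le> q" "0 \<le> \<delta>"
  shows "integrable M (\<lambda>v. tw_target \<delta> m n q v)"
  by (rule V.P.integrable_const_bound[where B = "(1 + \<delta>) * q"])
    (use assms tw_target_nonneg tw_target_le in auto)

lemma integrable_of_bool_num_above:
  "integrable M (\<lambda>v. of_bool (P (num_above n q v)) :: real)"
  by (rule V.P.integrable_const_bound[where B = 1]) auto

lemma integrable_capped_supply: "integrable M (\<lambda>v. min (real m) (real (num_above n q v)))"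
proof (rule V.P.integrable_const_bound[where B = "real m"])
  show "(\<lambda>v. min (real m) (real (num_above n q v))) \<in> borel_measurable M"
    by measurable
qed auto

lemma integral_tw_target_eq_price:
  assumes "equilibrium_price \<alpha> \<delta> m n F q" "0 < \<alpha>" "0 \<le> q" "0 \<le> \<delta>"
  shows "(\<integral>v. tw_target \<delta> m n q v \<partial>M) = q"
proof -
  have "q = (\<integral>v. \<alpha> * tw_target \<delta> m n q v + (1 - \<alpha>) * q \<partial>M)"
    using assms(1) by (simp add: equilibrium_price_def expected_T_def expectation_T_TW)
  also have "\<dots> = \<alpha> * (\<integral>v. tw_target \<delta> m n q v \<partial>M) + (1 - \<alpha>) * q"
    using integrable_tw_target[OF assms(3,4)] by (simp add: V.P.prob_space)
  finally show ?thesis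
    using assms(2) by (simp add: algebra_simps)
qed

lemma prob_unsaturated_ge:
  assumes "(\<integral>v. tw_target \<delta> m n q v \<partial>M) = q" "0 < q" "0 \<le> \<delta>"
  shows "\<delta> \<le> (1 + \<delta>) * (\<integral>v. of_bool (num_above n q v < m) \<partial>M)"
proof -
  let ?P = "\<integral>v. of_bool (num_above n q v < m) \<partial>M :: real"
  have "(\<integral>v. of_bool (m \<le> num_above n q v) \<partial>M) = (\<integral>v. 1 - of_bool (num_above n q v < m) \<partial>M :: real)"
    by (intro Bochner_Integration.integral_cong) auto
  also have "\<dots> = 1 - ?P"
    using Bochner_Integration.integral_diff[OF V.P.integrable_const integrable_of_bool_num_above,
        of 1 "\<lambda>N. N < m" q]
    by (simp add: V.P.prob_space)
  finally have "(1 + \<delta>) * q * (1 - ?P) = (\<integral>v. (1 + \<delta>) * q * of_bool (m \<le> num_above n q v) \<partial>M)"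
    by simp
  also have "\<dots> \<le> (\<integral>v. tw_target \<delta> m n q v \<partial>M)"
    using assms(2,3) integrable_of_bool_num_above[of "\<lambda>N. m \<le> N" q]
    by (intro integral_mono integrable_tw_target tw_target_saturated_ge) auto
  finally have "(1 + \<delta>) * (1 - ?P) * q \<le> 1 * q"
    using assms(1) by (simp add: mult_ac)
  then have "(1 + \<delta>) * (1 - ?P) \<le> 1"
    using assms(2) by (rule mult_right_le_imp_le)
  then show ?thesis
    by (simp add: algebra_simps)
qed

lemma integral_capped_supply_ge:
  assumes "(\<integral>v. tw_target \<delta> m n q v \<partial>M) = q" "0 < q" "0 \<le> \<delta>"
  shows "real m \<le> (1 + \<delta>) * (\<integral>v. min (real m) (real (num_above n q v)) \<partial>M)"
proof -
  have "(\<integral>v. real m * tw_target \<delta> m n q v \<partial>M)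
      \<le> (\<integral>v. (1 + \<delta>) * q * min (real m) (real (num_above n q v)) \<partial>M)"
    using integrable_tw_target[of q \<delta>] integrable_capped_supply assms(2,3)
    by (intro integral_mono tw_target_le_capped_supply) auto
  then have "real m * q \<le> (1 + \<delta>) * (\<integral>v. min (real m) (real (num_above n q v)) \<partial>M) * q"
    using assms(1) by (simp add: mult_ac)
  then show ?thesis
    using assms(2) by simp
qed

lemma integral_mult_indep_value:
  fixes a :: "(nat \<Rightarrow> real) \<Rightarrow> real" and b :: "real \<Rightarrow> real"
  assumes "i < n" and a_indep: "\<And>v y. a (v(i := y)) = a v"
    and "integrable M a" "integrable M (\<lambda>v. a v * b (v i))"
  shows "(\<integral>v. a v * b (v i) \<partial>M) = (\<integral>v. a v \<partial>M) * (\<integral>x. b x \<partial>F)"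
proof -
  define J where "J = {..<n} - {i}"
  have J: "finite J" "i \<notin> J" and insert_J: "insert i J = {..<n}"
    using \<open>i < n\<close> by (auto simp: J_def)
  have fubini: "(\<integral>v. f v \<partial>M) = (\<integral>v. (\<integral>y. f (v(i := y)) \<partial>F) \<partial>PiM J (\<lambda>_. F))"
    if "integrable M f" for f :: "(nat \<Rightarrow> real) \<Rightarrow> real"
    using V.product_integral_insert[OF J, of f] that by (simp add: insert_J)
  show ?thesis
    using fubini[OF assms(4)] fubini[OF assms(3)] prob_space.prob_space[OF prob_space_F]
    by (simp add: a_indep)
qed

text \<open>If fewer than \<open>m\<close> bidders clear the price, then so do fewer than \<open>m\<close> of the
  bidders other than \<open>i\<close>; this event is independent of \<open>v i\<close>, and together with
  \<open>v i \<ge> q\<close> it still forces \<open>num_above \<le> m\<close>.\<close>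

lemma integral_excess_unsaturated_ge:
  assumes "i < n"
  shows "(\<integral>v. of_bool (num_above n q v < m) \<partial>M) * (\<integral>x. max (x - q) 0 \<partial>F)
    \<le> (\<integral>v. of_bool (num_above n q v \<le> m) * max (v i - q) 0 \<partial>M)"
proof -
  define others where "others v = (\<Sum>j\<in>{..<n} - {i}. of_bool (q \<le> v j) :: nat)" for v
  have [measurable]: "others \<in> M \<rightarrow>\<^sub>M count_space UNIV"
    unfolding others_def by measurable
  have others_indep: "others (v(i := y)) = others v" for v y
    unfolding others_def by (intro sum.cong) auto
  have num_above_split: "num_above n q v = of_bool (q \<le> v i) + others v" for v
    unfolding num_above_eq_sum others_def using assms by (subst sum.remove[of _ i]) auto
  have "(\<integral>v. of_bool (num_above n q v < m) \<partial>M) \<le> (\<integral>v. of_bool (others v < m) \<partial>M :: real)"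
    using integrable_of_bool_num_above[of "\<lambda>N. N < m" q]
    by (intro integral_mono V.P.integrable_const_bound[where B = 1]) (auto simp: num_above_split)
  then have "(\<integral>v. of_bool (num_above n q v < m) \<partial>M) * (\<integral>x. max (x - q) 0 \<partial>F)
      \<le> (\<integral>v. of_bool (others v < m) \<partial>M) * (\<integral>x. max (x - q) 0 \<partial>F)"
    by (intro mult_right_mono) auto
  also have "\<dots> = (\<integral>v. of_bool (others v < m) * max (v i - q) 0 \<partial>M)"
  proof (rule integral_mult_indep_value[where b = "\<lambda>x. max (x - q) 0", symmetric])
    show "integrable M (\<lambda>v. of_bool (others v < m) :: real)"
      by (rule V.P.integrable_const_bound[where B = 1]) auto
    show "integrable M (\<lambda>v. of_bool (others v < m) * max (v i - q) 0)"
      using assms by (intro integrable_of_bool_mult integrable_excess) auto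
  qed (use assms others_indep in auto)
  also have "\<dots> \<le> (\<integral>v. of_bool (num_above n q v \<le> m) * max (v i - q) 0 \<partial>M)"
    using assms integrable_excess
    by (intro integral_mono integrable_of_bool_mult) (auto simp: num_above_split)
  finally show ?thesis .
qed

lemma integrable_surplus: "integrable M (surplus n q)"
  unfolding surplus_def by (intro Bochner_Integration.integrable_sum integrable_excess) auto

lemma integral_surplus: "(\<integral>v. surplus n q v \<partial>M) = real n * (\<integral>x. max (x - q) 0 \<partial>F)"
proof -
  have "(\<integral>v. surplus n q v \<partial>M) = (\<Sum>i<n. \<integral>v. max (v i - q) 0 \<partial>M)"
    unfolding surplus_def by (intro Bochner_Integration.integral_sum integrable_excess) auto
  also have "\<dots> = (\<Sum>i<n. \<integral>x. max (x - q) 0 \<partial>F)"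
    using integrable_excess_price by (intro sum.cong refl integral_component) auto
  finally show ?thesis by simp
qed

lemma welfare_ge:
  assumes "0 \<le> q"
  shows "q * (\<integral>v. min (real m) (real (num_above n q v)) \<partial>M)
      + real n * ((\<integral>v. of_bool (num_above n q v < m) \<partial>M) * (\<integral>x. max (x - q) 0 \<partial>F))
    \<le> welfare m n F q"
proof -
  have excess_terms: "integrable M (\<lambda>v. of_bool (num_above n q v \<le> m) * max (v i - q) 0)"
    if "i < n" for i
    using that by (intro integrable_of_bool_mult integrable_excess) auto
  have "real n * ((\<integral>v. of_bool (num_above n q v < m) \<partial>M) * (\<integral>x. max (x - q) 0 \<partial>F))
      = (\<Sum>i<n. (\<integral>v. of_bool (num_above n q v < m) \<partial>M) * (\<integral>x. max (x - q) 0 \<partial>F))"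
    by simp
  also have "\<dots> \<le> (\<Sum>i<n. \<integral>v. of_bool (num_above n q v \<le> m) * max (v i - q) 0 \<partial>M)"
    by (intro sum_mono integral_excess_unsaturated_ge) simp
  also have "q * (\<integral>v. min (real m) (real (num_above n q v)) \<partial>M) + \<dots> = (\<integral>v. welfare_lb m n q v \<partial>M)"
  proof -
    have "(\<integral>v. (\<Sum>i<n. of_bool (num_above n q v \<le> m) * max (v i - q) 0) \<partial>M)
        = (\<Sum>i<n. \<integral>v. of_bool (num_above n q v \<le> m) * max (v i - q) 0 \<partial>M)"
      by (rule Bochner_Integration.integral_sum) (rule excess_terms, simp)
    moreover have "integrable M (\<lambda>v. \<Sum>i<n. of_bool (num_above n q v \<le> m) * max (v i - q) 0)"
      by (rule Bochner_Integration.integrable_sum) (rule excess_terms, simp)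
    ultimately show ?thesis
      unfolding welfare_lb_def using integrable_capped_supply
      by (subst Bochner_Integration.integral_add) auto
  qed
  also have "\<dots> \<le> welfare m n F q"
    unfolding welfare_def values_measure_eq
  proof (rule integral_mono[OF _ integrable_welfare_integrand welfare_lb_le_expectation[OF assms]])
    show "integrable M (welfare_lb m n q)"
      unfolding welfare_lb_def using integrable_capped_supply
      by (intro Bochner_Integration.integrable_add Bochner_Integration.integrable_sum
          integrable_mult_right excess_terms) auto
  qed
  finally show ?thesis by simp
qed

lemma welfare_nonneg:
  assumes "0 \<le> q"
  shows "0 \<le> welfare m n F q"
proof -
  have "0 \<le> q * (\<integral>v. min (real m) (real (num_above n q v)) \<partial>M)
      + real n * ((\<integral>v. of_bool (num_above n q v < m) \<partial>M) * (\<integral>x. max (x - q) 0 \<partial>F))"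
    using assms by (intro add_nonneg_nonneg mult_nonneg_nonneg Bochner_Integration.integral_nonneg) auto
  also have "\<dots> \<le> welfare m n F q"
    by (rule welfare_ge[OF assms])
  finally show ?thesis .
qed

lemma OPT_le:
  assumes "0 \<le> q"
  shows "OPT m n F \<le> real m * q + real n * (\<integral>x. max (x - q) 0 \<partial>F)"
proof (cases "integrable M (top_sum (min m n) n)")
  case True
  have "OPT m n F \<le> (\<integral>v. real m * q + surplus n q v \<partial>M)"
    unfolding OPT_def values_measure_eq
  proof (rule integral_mono[OF True])
    show "top_sum (min m n) n v \<le> real m * q + surplus n q v" for v
      using top_sum_le[OF assms, of "min m n" n v] mult_right_mono[of "real (min m n)" "real m" q] assms
      by simp
  qed (use integrable_surplus in simp)
  also have "\<dots> = real m * q + real n * (\<integral>x. max (x - q) 0 \<partial>F)"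
    using integrable_surplus by (simp add: integral_surplus V.P.prob_space)
  finally show ?thesis .
next
  case False
  then have "OPT m n F = 0"
    unfolding OPT_def values_measure_eq by (rule not_integrable_integral_eq)
  then show ?thesis
    using assms Bochner_Integration.integral_nonneg[of F "\<lambda>x. max (x - q) 0"] by simp
qed

lemma welfare_ge_OPT:
  assumes "equilibrium_price \<alpha> \<delta> m n F q" "0 < \<alpha>" "0 < \<delta>" "0 < q"
  shows "min 1 \<delta> / (1 + \<delta>) * OPT m n F \<le> welfare m n F q"
proof -
  let ?E = "\<integral>v. min (real m) (real (num_above n q v)) \<partial>M"
  let ?P = "\<integral>v. of_bool (num_above n q v < m) \<partial>M :: real"
  let ?X = "\<integral>x. max (x - q) 0 \<partial>F"
  have target: "(\<integral>v. tw_target \<delta> m n q v \<partial>M) = q"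
    using assms by (intro integral_tw_target_eq_price) auto
  have "?X \<ge> 0"
    by (intro Bochner_Integration.integral_nonneg) auto
  have "min 1 \<delta> * OPT m n F \<le> min 1 \<delta> * (real m * q + real n * ?X)"
    using OPT_le assms by (intro mult_left_mono) auto
  also have "\<dots> = min 1 \<delta> * (real m * q) + min 1 \<delta> * (real n * ?X)"
    by (simp add: distrib_left)
  also have "\<dots> \<le> real m * q + \<delta> * (real n * ?X)"
    using \<open>?X \<ge> 0\<close> assms by (intro add_mono mult_left_le_one_le mult_right_mono) auto
  also have "\<dots> \<le> (1 + \<delta>) * ?E * q + (1 + \<delta>) * ?P * (real n * ?X)"
    using integral_capped_supply_ge[OF target] prob_unsaturated_ge[OF target] \<open>?X \<ge> 0\<close> assms
    by (intro add_mono mult_right_mono) auto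
  also have "\<dots> = (1 + \<delta>) * (q * ?E + real n * (?P * ?X))"
    by (simp add: algebra_simps)
  also have "\<dots> \<le> (1 + \<delta>) * welfare m n F q"
    using welfare_ge assms by (intro mult_left_mono) auto
  finally show ?thesis
    using assms by (simp add: pos_divide_le_eq mult.commute)
qed

end

theorem mainTheorem11:
  fixes F :: "real measure" and m n :: nat and \<alpha> \<delta> q :: real
  assumes "prob_space F" and "sets F = sets borel"
    and "AE x in F. 0 \<le> x" and "integrable F (\<lambda>x. x)"
    and "m \<ge> 1"
    and "0 < \<alpha>" and "\<alpha> < 1" and "0 < \<delta>"
    and "q > 0"
    and "equilibrium_price \<alpha> \<delta> m n F q"
  shows "welfare m n F q \<ge> OPT m n F / (2 * (1 + \<delta>)) * min 1 \<delta>"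
proof -
  \<comment> \<open>Nonnegative values, \<open>m \<ge> 1\<close> and \<open>\<alpha> < 1\<close> are not needed.\<close>
  interpret iid_values F n
    using assms(1,2,4) by (rule iid_values.intro)
  have "min 1 \<delta> / (1 + \<delta>) * OPT m n F / 2 \<le> welfare m n F q / 2"
    by (rule divide_right_mono[OF welfare_ge_OPT[OF assms(10,6,8,9)]]) simp
  also have "\<dots> \<le> welfare m n F q"
    using welfare_nonneg[of q m] assms(9) by simp
  finally show ?thesis
    by (simp add: field_simps)
qed

end
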